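(* Let $n\geq 3$ and let $L^B$ be a blow-up of the Boolean lattice $L\cong\mathbf{2}^n$ such that $L^B\cong L\cong\mathbf{2}^n$ (i.e. every replacing chain has exactly one element). Then $G^c(L^B)_{SR}=G(L^B)$.
   Context: Blow-up: keep $0,1$ of $L=\mathbf{2}^n$ and replace every $x\in L\setminus\{0,1\}$ by a finite nonempty chain $C_x$, ordered by the chain order within $C_x$ and, for $a\in C_x,b\in C_y$, $x\neq y$, by $a\leq b$ iff $x\leq y$ in $L$. $Z^*(M)$ is the set of nonzero $a$ with $a\wedge b=0$ for some $b\neq0$. $G(M)$ (zero-divisor graph) has vertex set $Z^*(M)$, distinct $a,b$ adjacent iff $a\wedge b=0$; $G^c(M)$ is its complement on the same vertex set. In a connected graph, $u$ is maximally distant from $v$ if $d(v,w)\leq d(u,v)$ for all neighbours $w$ of $u$; mutually maximally distant means each is maximally distant from the other. $G_{SR}$ has as vertices those $u$ mutually maximally distant from some $v$, distinct vertices adjacent iff mutually maximally distant in $G$. *)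

theory Defs
  imports Main
begin

(* Elements of a blow-up of the Boolean lattice 2^n = Pow {..<n}:
   Bot (= 0), Top (= 1), and Mid x i = the i-th element of the chain C_x
   replacing the proper nonempty subset x. *)
datatype blowup = Bot | Top | Mid "nat set" nat

(* carrier of the blow-up; k x is the length of the chain C_x (k x >= 1) *)
definition blow_carrier :: "nat \<Rightarrow> (nat set \<Rightarrow> nat) \<Rightarrow> blowup set" where
  "blow_carrier n k = {Bot, Top} \<union>
     {Mid x i | x i. x \<subseteq> {..<n} \<and> x \<noteq> {} \<and> x \<noteq> {..<n} \<and> i < k x}"

fun blow_le :: "blowup \<Rightarrow> blowup \<Rightarrow> bool" where
  "blow_le Bot b = True"
| "blow_le a Top = True"
| "blow_le Top b = (b = Top)"
| "blow_le (Mid x i) Bot = False"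
| "blow_le (Mid x i) (Mid y j) = (if x = y then i \<le> j else x \<subseteq> y)"

definition meet_zero :: "nat \<Rightarrow> (nat set \<Rightarrow> nat) \<Rightarrow> blowup \<Rightarrow> blowup \<Rightarrow> bool" where
  "meet_zero n k a b \<longleftrightarrow>
     (\<forall>c\<in>blow_carrier n k. blow_le c a \<and> blow_le c b \<longrightarrow> c = Bot)"

definition Zstar :: "nat \<Rightarrow> (nat set \<Rightarrow> nat) \<Rightarrow> blowup set" where
  "Zstar n k = {a \<in> blow_carrier n k. a \<noteq> Bot \<and>
                 (\<exists>b\<in>blow_carrier n k. b \<noteq> Bot \<and> meet_zero n k a b)}"

definition zdg_adj :: "nat \<Rightarrow> (nat set \<Rightarrow> nat) \<Rightarrow> blowup \<Rightarrow> blowup \<Rightarrow> bool" where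
  "zdg_adj n k a b \<longleftrightarrow> a \<in> Zstar n k \<and> b \<in> Zstar n k \<and> a \<noteq> b \<and> meet_zero n k a b"

definition zdgc_adj :: "nat \<Rightarrow> (nat set \<Rightarrow> nat) \<Rightarrow> blowup \<Rightarrow> blowup \<Rightarrow> bool" where
  "zdgc_adj n k a b \<longleftrightarrow> a \<in> Zstar n k \<and> b \<in> Zstar n k \<and> a \<noteq> b \<and> \<not> meet_zero n k a b"

definition walk_len :: "'a set \<Rightarrow> ('a \<Rightarrow> 'a \<Rightarrow> bool) \<Rightarrow> 'a \<Rightarrow> 'a \<Rightarrow> nat \<Rightarrow> bool" where
  "walk_len V E u v m \<longleftrightarrow> (\<exists>xs. length xs = Suc m \<and> hd xs = u \<and> last xs = v \<and>
      set xs \<subseteq> V \<and> (\<forall>i<m. E (xs ! i) (xs ! Suc i)))"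

definition gdist :: "'a set \<Rightarrow> ('a \<Rightarrow> 'a \<Rightarrow> bool) \<Rightarrow> 'a \<Rightarrow> 'a \<Rightarrow> nat" where
  "gdist V E u v = (LEAST m. walk_len V E u v m)"

definition max_distant :: "'a set \<Rightarrow> ('a \<Rightarrow> 'a \<Rightarrow> bool) \<Rightarrow> 'a \<Rightarrow> 'a \<Rightarrow> bool" where
  "max_distant V E u v \<longleftrightarrow> (\<forall>w\<in>V. E u w \<longrightarrow> gdist V E v w \<le> gdist V E u v)"

definition mutually_max_distant :: "'a set \<Rightarrow> ('a \<Rightarrow> 'a \<Rightarrow> bool) \<Rightarrow> 'a \<Rightarrow> 'a \<Rightarrow> bool" where
  "mutually_max_distant V E u v \<longleftrightarrow> max_distant V E u v \<and> max_distant V E v u"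

definition SR_vertices :: "'a set \<Rightarrow> ('a \<Rightarrow> 'a \<Rightarrow> bool) \<Rightarrow> 'a set" where
  "SR_vertices V E = {u \<in> V. \<exists>v\<in>V. mutually_max_distant V E u v}"

definition SR_adj :: "'a set \<Rightarrow> ('a \<Rightarrow> 'a \<Rightarrow> bool) \<Rightarrow> 'a \<Rightarrow> 'a \<Rightarrow> bool" where
  "SR_adj V E u v \<longleftrightarrow> u \<in> SR_vertices V E \<and> v \<in> SR_vertices V E \<and> u \<noteq> v \<and>
      mutually_max_distant V E u v"

end

theory Submission
  imports Defs
begin

(* If every chain is a singleton, the blow-up is 2^n itself and Z^*(L^B) consists of the
   proper nonempty subsets x of {..<n}, two of them meeting in 0 iff they are disjoint.
   In G^c two distinct proper subsets are adjacent iff they overlap, and for n \<ge> 3 two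
   disjoint ones have the common neighbour {a, b} (a \<in> x, b \<in> y); so G^c has
   diameter 2 and disjoint pairs are exactly the pairs at distance 2. An overlapping pair
   x, y is never mutually maximally distant: if c \<in> x - y then {c} is a neighbour of x
   at distance 2 from y, and if x = y then any neighbour of x is farther from y. Hence
   mutual maximal distance in G^c is exactly adjacency in G. *)

definition proper :: "nat \<Rightarrow> nat set \<Rightarrow> bool" where
  "proper n x \<longleftrightarrow> x \<subseteq> {..<n} \<and> x \<noteq> {} \<and> x \<noteq> {..<n}"

lemma proper_pair:
  assumes "3 \<le> n" "a < n" "b < n"
  shows "proper n {a, b}"
proof -
  have "card {a, b} \<le> 2"
    by (simp add: card_insert_if)
  then have "card {a, b} \<noteq> card {..<n}"
    using assms(1) by simp
  then have "{a, b} \<noteq> {..<n}"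
    by metis
  then show ?thesis
    using assms(2,3) unfolding proper_def by simp
qed

lemma proper_complement: "proper n x \<Longrightarrow> proper n ({..<n} - x)"
  unfolding proper_def by auto

lemma walk_len_0_imp_eq: "walk_len V E u v 0 \<Longrightarrow> u = v"
  unfolding walk_len_def by (auto simp: length_Suc_conv)

lemma walk_len_1_imp_adj: "walk_len V E u v 1 \<Longrightarrow> E u v"
  unfolding walk_len_def by (auto simp: length_Suc_conv)

lemma walk_len_adj: "u \<in> V \<Longrightarrow> v \<in> V \<Longrightarrow> E u v \<Longrightarrow> walk_len V E u v 1"
  unfolding walk_len_def by (intro exI[of _ "[u, v]"]) auto

lemma walk_len_common_neighbour:
  "u \<in> V \<Longrightarrow> v \<in> V \<Longrightarrow> w \<in> V \<Longrightarrow> E u w \<Longrightarrow> E w v \<Longrightarrow> walk_len V E u v 2"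
  unfolding walk_len_def by (intro exI[of _ "[u, w, v]"]) (auto simp: less_Suc_eq numeral_2_eq_2)

lemma gdist_le: "walk_len V E u v m \<Longrightarrow> gdist V E u v \<le> m"
  unfolding gdist_def by (rule Least_le)

lemma walk_len_gdist: "walk_len V E u v m \<Longrightarrow> walk_len V E u v (gdist V E u v)"
  unfolding gdist_def by (rule LeastI)

lemma gdist_self: "u \<in> V \<Longrightarrow> gdist V E u u = 0"
  using gdist_le[of V E u u 0] unfolding walk_len_def by (force intro: exI[of _ "[u]"])

lemma gdist_adj:
  assumes "u \<in> V" "v \<in> V" "E u v" "u \<noteq> v"
  shows "gdist V E u v = 1"
proof -
  have walk: "walk_len V E u v 1"
    using assms(1-3) by (rule walk_len_adj)
  have "gdist V E u v \<noteq> 0"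
    using walk_len_gdist[OF walk] walk_len_0_imp_eq assms(4) by metis
  then show ?thesis
    using gdist_le[OF walk] by simp
qed

lemma gdist_common_neighbour:
  assumes "u \<in> V" "v \<in> V" "w \<in> V" "E u w" "E w v" "u \<noteq> v" "\<not> E u v"
  shows "gdist V E u v = 2"
proof -
  have walk: "walk_len V E u v 2"
    using assms by (intro walk_len_common_neighbour)
  have "gdist V E u v \<noteq> 0"
    using walk_len_gdist[OF walk] walk_len_0_imp_eq assms(6) by metis
  moreover have "gdist V E u v \<noteq> 1"
    using walk_len_gdist[OF walk] walk_len_1_imp_adj assms(7) by metis
  ultimately show ?thesis
    using gdist_le[OF walk] by simp
qed

lemma farther_neighbour_not_max_distant:
  assumes "w \<in> V" "E u w" "gdist V E u v < gdist V E v w"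
  shows "\<not> max_distant V E u v"
  using assms unfolding max_distant_def by force

lemma meet_zero_commute: "meet_zero n k a b \<longleftrightarrow> meet_zero n k b a"
  unfolding meet_zero_def by blast

lemma Top_notin_Zstar: "Top \<notin> Zstar n k"
proof
  assume "Top \<in> Zstar n k"
  then obtain b where "b \<in> blow_carrier n k" "b \<noteq> Bot" "meet_zero n k Top b"
    unfolding Zstar_def by blast
  moreover have "blow_le b Top" "blow_le b b"
    by (cases b; simp)+
  ultimately show False
    unfolding meet_zero_def by blast
qed

locale singleton_chain_blowup =
  fixes n :: nat and k :: "nat set \<Rightarrow> nat"
  assumes singleton_chains: "proper n x \<Longrightarrow> k x = 1"
begin

lemma blow_carrier_eq: "blow_carrier n k = {Bot, Top} \<union> {Mid x 0 | x. proper n x}"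
proof -
  have "{Mid x i | x i. x \<subseteq> {..<n} \<and> x \<noteq> {} \<and> x \<noteq> {..<n} \<and> i < k x} =
        {Mid x 0 | x. proper n x}"
  proof (intro set_eqI iffI)
    fix a assume "a \<in> {Mid x i | x i. x \<subseteq> {..<n} \<and> x \<noteq> {} \<and> x \<noteq> {..<n} \<and> i < k x}"
    then obtain x i where "a = Mid x i" "proper n x" "i < k x"
      unfolding proper_def by blast
    then show "a \<in> {Mid x 0 | x. proper n x}"
      using singleton_chains by auto
  next
    fix a assume "a \<in> {Mid x 0 | x. proper n x}"
    then obtain x where "a = Mid x 0" "proper n x"
      by blast
    then show "a \<in> {Mid x i | x i. x \<subseteq> {..<n} \<and> x \<noteq> {} \<and> x \<noteq> {..<n} \<and> i < k x}"
      using singleton_chains unfolding proper_def by auto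
  qed
  then show ?thesis
    unfolding blow_carrier_def by simp
qed

lemma meet_zero_Mid_iff:
  assumes "proper n x" "proper n y"
  shows "meet_zero n k (Mid x 0) (Mid y 0) \<longleftrightarrow> x \<inter> y = {}"
proof
  assume meet: "meet_zero n k (Mid x 0) (Mid y 0)"
  show "x \<inter> y = {}"
  proof (rule ccontr)
    assume "x \<inter> y \<noteq> {}"
    then have "proper n (x \<inter> y)"
      using assms(2) unfolding proper_def by auto
    then have "Mid (x \<inter> y) 0 \<in> blow_carrier n k"
      using blow_carrier_eq by blast
    moreover have "blow_le (Mid (x \<inter> y) 0) (Mid x 0)" "blow_le (Mid (x \<inter> y) 0) (Mid y 0)"
      by auto
    ultimately show False
      using meet unfolding meet_zero_def by blast
  qed
next
  assume disjoint: "x \<inter> y = {}"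
  show "meet_zero n k (Mid x 0) (Mid y 0)"
    unfolding meet_zero_def
  proof (intro ballI impI)
    fix c assume c: "c \<in> blow_carrier n k" and below: "blow_le c (Mid x 0) \<and> blow_le c (Mid y 0)"
    then have "c \<noteq> Top"
      by auto
    then obtain z where "c = Bot \<or> (c = Mid z 0 \<and> proper n z)"
      using c blow_carrier_eq by blast
    moreover have "z \<subseteq> x \<inter> y" if "c = Mid z 0"
      using below that by (auto split: if_splits)
    ultimately show "c = Bot"
      using disjoint unfolding proper_def by blast
  qed
qed

lemma Zstar_eq: "Zstar n k = {Mid x 0 | x. proper n x}"
proof
  have "Zstar n k \<subseteq> blow_carrier n k - {Bot, Top}"
    using Top_notin_Zstar unfolding Zstar_def by blast
  then show "Zstar n k \<subseteq> {Mid x 0 | x. proper n x}"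
    using blow_carrier_eq by blast
next
  show "{Mid x 0 | x. proper n x} \<subseteq> Zstar n k"
  proof clarify
    fix x assume x: "proper n x"
    then have "meet_zero n k (Mid x 0) (Mid ({..<n} - x) 0)"
      using meet_zero_Mid_iff proper_complement by auto
    then show "Mid x 0 \<in> Zstar n k"
      using x proper_complement[OF x] blow_carrier_eq unfolding Zstar_def by blast
  qed
qed

lemma Mid_in_Zstar: "proper n x \<Longrightarrow> Mid x 0 \<in> Zstar n k"
  using Zstar_eq by blast

lemma zdgc_adj_Mid_iff:
  assumes "proper n x" "proper n y"
  shows "zdgc_adj n k (Mid x 0) (Mid y 0) \<longleftrightarrow> x \<noteq> y \<and> x \<inter> y \<noteq> {}"
  using assms Mid_in_Zstar meet_zero_Mid_iff unfolding zdgc_adj_def by auto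

end

locale singleton_chain_blowup_3 = singleton_chain_blowup +
  assumes three_le_n: "3 \<le> n"
begin

lemma gdist_zdgc_Mid:
  assumes "proper n x" "proper n y"
  shows "gdist (Zstar n k) (zdgc_adj n k) (Mid x 0) (Mid y 0) =
           (if x = y then 0 else if x \<inter> y = {} then 2 else 1)"
proof -
  consider "x = y" | "x \<noteq> y" "x \<inter> y \<noteq> {}" | "x \<inter> y = {}"
    by blast
  then show ?thesis
  proof cases
    case 1
    then show ?thesis
      using gdist_self[OF Mid_in_Zstar[OF assms(1)]] by simp
  next
    case 2
    then have "zdgc_adj n k (Mid x 0) (Mid y 0)"
      using zdgc_adj_Mid_iff[OF assms] by simp
    then show ?thesis
      using 2 gdist_adj[OF Mid_in_Zstar[OF assms(1)] Mid_in_Zstar[OF assms(2)]] by simp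
  next
    case 3
    obtain a b where ab: "a \<in> x" "b \<in> y"
      using assms unfolding proper_def by blast
    have "a < n" "b < n"
      using ab assms unfolding proper_def by auto
    then have pair: "proper n {a, b}"
      using three_le_n by (intro proper_pair)
    have "x \<noteq> y"
      using 3 assms(1) unfolding proper_def by auto
    moreover have "zdgc_adj n k (Mid x 0) (Mid {a, b} 0)" "zdgc_adj n k (Mid {a, b} 0) (Mid y 0)"
      using zdgc_adj_Mid_iff[OF assms(1) pair] zdgc_adj_Mid_iff[OF pair assms(2)] ab 3 by auto
    moreover have "\<not> zdgc_adj n k (Mid x 0) (Mid y 0)"
      using zdgc_adj_Mid_iff[OF assms] 3 by simp
    ultimately show ?thesis
      using 3 gdist_common_neighbour[OF Mid_in_Zstar[OF assms(1)] Mid_in_Zstar[OF assms(2)]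
          Mid_in_Zstar[OF pair]]
      by simp
  qed
qed

lemma gdist_zdgc_le_2:
  assumes "u \<in> Zstar n k" "v \<in> Zstar n k"
  shows "gdist (Zstar n k) (zdgc_adj n k) u v \<le> 2"
  using assms Zstar_eq gdist_zdgc_Mid by force

lemma max_distant_zdgc_self:
  assumes "proper n x"
  shows "\<not> max_distant (Zstar n k) (zdgc_adj n k) (Mid x 0) (Mid x 0)"
proof -
  obtain a b where ab: "a \<in> x" "b < n" "b \<notin> x"
    using assms unfolding proper_def by blast
  have "a < n"
    using ab(1) assms unfolding proper_def by auto
  then have pair: "proper n {a, b}"
    using three_le_n ab(2) by (intro proper_pair)
  have "zdgc_adj n k (Mid x 0) (Mid {a, b} 0)"
    using zdgc_adj_Mid_iff[OF assms pair] ab by auto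
  moreover have "gdist (Zstar n k) (zdgc_adj n k) (Mid x 0) (Mid {a, b} 0) = 1"
    using gdist_zdgc_Mid[OF assms pair] ab by auto
  ultimately show ?thesis
    using farther_neighbour_not_max_distant[OF Mid_in_Zstar[OF pair]] gdist_zdgc_Mid[OF assms assms]
    by simp
qed

lemma max_distant_zdgc_overlapping:
  assumes "proper n x" "proper n y" "x \<inter> y \<noteq> {}" "c \<in> x" "c \<notin> y"
  shows "\<not> max_distant (Zstar n k) (zdgc_adj n k) (Mid x 0) (Mid y 0)"
proof -
  have "c < n"
    using assms(1,4) unfolding proper_def by auto
  then have single: "proper n {c}"
    using proper_pair[OF three_le_n, of c c] by simp
  have "x \<noteq> {c}"
    using assms(3-5) by auto
  then have "zdgc_adj n k (Mid x 0) (Mid {c} 0)"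
    using zdgc_adj_Mid_iff[OF assms(1) single] assms(4) by simp
  moreover have "gdist (Zstar n k) (zdgc_adj n k) (Mid x 0) (Mid y 0) = 1"
    using gdist_zdgc_Mid[OF assms(1,2)] assms(3-5) by auto
  moreover have "gdist (Zstar n k) (zdgc_adj n k) (Mid y 0) (Mid {c} 0) = 2"
    using gdist_zdgc_Mid[OF assms(2) single] assms(5) by auto
  ultimately show ?thesis
    using farther_neighbour_not_max_distant[OF Mid_in_Zstar[OF single]] by simp
qed

lemma mutually_max_distant_zdgc_Mid_iff:
  assumes "proper n x" "proper n y"
  shows "mutually_max_distant (Zstar n k) (zdgc_adj n k) (Mid x 0) (Mid y 0) \<longleftrightarrow> x \<inter> y = {}"
proof
  assume disjoint: "x \<inter> y = {}"
  then have "gdist (Zstar n k) (zdgc_adj n k) (Mid x 0) (Mid y 0) = 2"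
    "gdist (Zstar n k) (zdgc_adj n k) (Mid y 0) (Mid x 0) = 2"
    using gdist_zdgc_Mid[OF assms] gdist_zdgc_Mid[OF assms(2,1)] assms(1)
    unfolding proper_def by auto
  then show "mutually_max_distant (Zstar n k) (zdgc_adj n k) (Mid x 0) (Mid y 0)"
    using gdist_zdgc_le_2 Mid_in_Zstar[OF assms(1)] Mid_in_Zstar[OF assms(2)]
    unfolding mutually_max_distant_def max_distant_def by auto
next
  assume "mutually_max_distant (Zstar n k) (zdgc_adj n k) (Mid x 0) (Mid y 0)"
  then have "max_distant (Zstar n k) (zdgc_adj n k) (Mid x 0) (Mid y 0)"
    "max_distant (Zstar n k) (zdgc_adj n k) (Mid y 0) (Mid x 0)"
    unfolding mutually_max_distant_def by auto
  then show "x \<inter> y = {}"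
    using max_distant_zdgc_self[OF assms(1)] max_distant_zdgc_overlapping[OF assms]
      max_distant_zdgc_overlapping[OF assms(2,1)]
    by (metis Int_commute subset_antisym subsetI)
qed

lemma mutually_max_distant_zdgc_iff_meet_zero:
  assumes "u \<in> Zstar n k" "v \<in> Zstar n k"
  shows "mutually_max_distant (Zstar n k) (zdgc_adj n k) u v \<longleftrightarrow> meet_zero n k u v"
  using assms Zstar_eq mutually_max_distant_zdgc_Mid_iff meet_zero_Mid_iff by auto

end

theorem corollary3p17:
  fixes n :: nat and k :: "nat set \<Rightarrow> nat"
  assumes "n \<ge> 3"
    and "\<forall>x. x \<subseteq> {..<n} \<and> x \<noteq> {} \<and> x \<noteq> {..<n} \<longrightarrow> k x = 1"
  shows "SR_vertices (Zstar n k) (zdgc_adj n k) = Zstar n k \<and>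
         (\<forall>u v. SR_adj (Zstar n k) (zdgc_adj n k) u v \<longleftrightarrow> zdg_adj n k u v)"
proof -
  interpret singleton_chain_blowup_3 n k
    using assms by unfold_locales (auto simp: proper_def)
  note mmd_iff = mutually_max_distant_zdgc_iff_meet_zero
  have "u \<in> SR_vertices (Zstar n k) (zdgc_adj n k)" if u: "u \<in> Zstar n k" for u
  proof -
    obtain v where "v \<in> blow_carrier n k" "v \<noteq> Bot" "meet_zero n k u v"
      using u unfolding Zstar_def by blast
    moreover from this have "v \<in> Zstar n k"
      using u meet_zero_commute unfolding Zstar_def by blast
    ultimately show ?thesis
      using u mmd_iff unfolding SR_vertices_def by blast
  qed
  then have "SR_vertices (Zstar n k) (zdgc_adj n k) = Zstar n k"
    unfolding SR_vertices_def by blast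
  then show ?thesis
    using mmd_iff unfolding SR_adj_def zdg_adj_def by auto
qed

end
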